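(* Let $p$ be prime, $a\in\mathbb{Z}_p^\times$, and $k$ an integer with $2\le k\le p-2$ and $\gcd(k,p-1)=1$. Then $D(\eta_{a,k})\le C\,k^{1/4}p^{3/4}\log^2 p$ for an absolute constant $C$ (uniformly in $a$ and $k$).
   Context: $\eta_{a,k}$ is the permutation of $\mathbb{Z}_p$ given by $\eta_{a,k}(s)=as^k$ (a permutation since $\gcd(k,p-1)=1$). An interval of $\mathbb{Z}_n$ is any subset that is the image of an interval of consecutive integers under the projection $\mathbb{Z}\to\mathbb{Z}_n$ (wrap-around allowed). For $S,T\subseteq\mathbb{Z}_n$, $D_T(S)=\bigl|\,|S\cap T|-|S||T|/n\,\bigr|$, and for a permutation $\sigma$ of $\mathbb{Z}_n$, $D(\sigma)=\max_{I,J}D_J(\sigma(I))$ over all intervals $I,J$ of $\mathbb{Z}_n$. *)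

theory Defs
  imports "HOL-Analysis.Analysis" "HOL-Computational_Algebra.Primes"
begin

text \<open>Z_n is modelled as the set {0..<n} of natural numbers (residues).\<close>

definition zn_interval :: "nat \<Rightarrow> nat \<Rightarrow> nat \<Rightarrow> nat set" where
  "zn_interval n s L = {(s + i) mod n | i. i < L}"

text \<open>Intervals of Z_n: images of runs of consecutive integers (wrap-around allowed);
  a run of length L \<ge> n covers all of Z_n, so lengths 0..n suffice.\<close>
definition zn_intervals :: "nat \<Rightarrow> nat set set" where
  "zn_intervals n = {zn_interval n s L | s L. s < n \<and> L \<le> n}"

definition discr :: "nat \<Rightarrow> nat set \<Rightarrow> nat set \<Rightarrow> real" where
  "discr n T S = \<bar>real (card (S \<inter> T)) - real (card S) * real (card T) / real n\<bar>"

definition perm_discrepancy :: "nat \<Rightarrow> (nat \<Rightarrow> nat) \<Rightarrow> real" where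
  "perm_discrepancy n \<sigma> = Max {discr n J (\<sigma> ` I) | I J. I \<in> zn_intervals n \<and> J \<in> zn_intervals n}"

definition eta :: "nat \<Rightarrow> nat \<Rightarrow> nat \<Rightarrow> nat \<Rightarrow> nat" where
  "eta p a k s = (a * s ^ k) mod p"

end

theory Submission
  imports Defs "HOL-Number_Theory.Residues"
begin

text \<open>
  Write \<open>e(m) = exp(2 \<pi> i m / p)\<close>. Expanding the indicator functions of \<open>I\<close> and \<open>J\<close> in
  additive characters gives
    \<open>p\<^sup>2 |\<sigma>(I) \<inter> J| = p |I| |J| + \<Sum>\<^bsub>h, l \<noteq> 0\<^esub> F\<^sub>I(h) F\<^sub>J(l) S(h, l)\<close>,
  where \<open>F\<^sub>I(h) = \<Sum>\<^bsub>u \<in> I\<^esub> e(-h u)\<close> and \<open>S(h, l) = \<Sum>\<^sub>x e(h x + l \<sigma>(x))\<close>; hence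
  \<open>D\<^sub>J(\<sigma>(I)) \<le> max |S| (\<Sum>\<^sub>h |F\<^sub>I(h)|) (\<Sum>\<^sub>l |F\<^sub>J(l)|) / p\<^sup>2\<close>. For an interval \<open>F\<^sub>I(h)\<close> is a
  geometric sum, and \<open>\<Sum>\<^bsub>h \<noteq> 0\<^esub> |F\<^sub>I(h)| \<le> 2 p (1 + log p)\<close>.

  For \<open>\<sigma> = \<eta>\<^bsub>a,k\<^esub>\<close> the fourth moment \<open>\<Sum>\<^bsub>h, l\<^esub> |S(h, l)|\<^sup>4\<close> is \<open>p\<^sup>2\<close> times the number of
  solutions of \<open>x\<^sub>1 + x\<^sub>2 = x\<^sub>3 + x\<^sub>4, x\<^sub>1\<^sup>k + x\<^sub>2\<^sup>k = x\<^sub>3\<^sup>k + x\<^sub>4\<^sup>k\<close>. Eliminating \<open>x\<^sub>4\<close>, for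
  \<open>x\<^sub>1 \<noteq> x\<^sub>3\<close> the second equation is a polynomial congruence of degree \<open>k - 1\<close> in \<open>x\<^sub>2\<close>,
  so there are at most \<open>k p\<^sup>2\<close> solutions. The substitution \<open>x \<mapsto> c x\<close> gives
  \<open>S(h, l) = S(c h, c\<^sup>k l)\<close>; for \<open>h \<noteq> 0\<close> these are \<open>p - 1\<close> distinct pairs, so
  \<open>(p - 1) |S(h, l)|\<^sup>4 \<le> k p\<^sup>4\<close>, i.e. \<open>|S(h, l)| \<le> 2 k\<^bsup>1/4\<^esup> p\<^bsup>3/4\<^esup>\<close>.
\<close>

section \<open>Additive characters of \<open>\<int>/p\<int>\<close>\<close>

lemma eq_if_dvd_diff_less:
  fixes x y p :: nat
  assumes "x < p" "y < p" "int p dvd int x - int y" shows "x = y"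
  using assms by (metis cong_iff_dvd_diff cong_int_iff cong_less_modulus_unique_nat)

definition add_char :: "nat \<Rightarrow> int \<Rightarrow> complex" where
  "add_char p m = cis (2 * pi * of_int m / real p)"

lemma add_char_add: "add_char p (m + n) = add_char p m * add_char p n"
  by (simp add: add_char_def cis_mult add_divide_distrib distrib_left)

lemma add_char_0 [simp]: "add_char p 0 = 1"
  by (simp add: add_char_def)

lemma norm_add_char [simp]: "norm (add_char p m) = 1"
  by (simp add: add_char_def)

lemma add_char_uminus: "add_char p (- m) = cnj (add_char p m)"
  by (simp add: add_char_def cis_cnj)

lemma add_char_power: "add_char p m ^ n = add_char p (int n * m)"
proof -
  have "add_char p m ^ n = cis (real n * (2 * pi * of_int m / real p))"
    unfolding add_char_def by (rule Complex.DeMoivre)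
  also have "real n * (2 * pi * of_int m / real p) = 2 * pi * of_int (int n * m) / real p" by simp
  finally show ?thesis unfolding add_char_def .
qed

lemma add_char_eq_1_iff:
  assumes "p > 0" shows "add_char p m = 1 \<longleftrightarrow> int p dvd m"
proof -
  have "add_char p m = 1 \<longleftrightarrow> (\<exists>n::int. 2 * pi * of_int m / real p = 2 * pi * of_int n)"
    by (simp add: add_char_def cis_conv_exp exp_eq_1 mult_ac)
  also have "\<dots> \<longleftrightarrow> (\<exists>n::int. of_int m = (of_int (int p * n) :: real))"
    using assms by (simp add: field_simps)
  also have "\<dots> \<longleftrightarrow> int p dvd m" unfolding of_int_eq_iff by (auto simp: dvd_def)
  finally show ?thesis .
qed

lemma add_char_multiple: "p > 0 \<Longrightarrow> add_char p (int p * q) = 1"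
  by (simp add: add_char_eq_1_iff)

lemma add_char_cong:
  assumes "p > 0" "[m = n] (mod int p)" shows "add_char p m = add_char p n"
proof -
  obtain q where "n = m + int p * q" using assms(2) by (auto simp: cong_iff_lin)
  then show ?thesis by (simp add: add_char_add add_char_multiple[OF assms(1)])
qed

lemma sum_add_char:
  assumes "p > 0"
  shows "(\<Sum>h<p. add_char p (int h * m)) = (if int p dvd m then of_nat p else 0)"
proof (cases "int p dvd m")
  case True
  then have "add_char p (int h * m) = 1" for h by (simp add: add_char_eq_1_iff[OF assms])
  then show ?thesis using True by simp
next
  case False
  have z: "add_char p m \<noteq> 1" using False by (simp add: add_char_eq_1_iff[OF assms])
  have "(\<Sum>h<p. add_char p (int h * m)) = (\<Sum>h<p. add_char p m ^ h)"
    by (simp add: add_char_power)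
  also have "\<dots> = (add_char p m ^ p - 1) / (add_char p m - 1)"
    using z by (rule geometric_sum)
  also have "add_char p m ^ p = 1"
    using add_char_multiple[OF assms, of m] by (simp add: add_char_power)
  finally show ?thesis using False by simp
qed

section \<open>Fourier expansion of the discrepancy\<close>

definition fourier_coeff :: "nat \<Rightarrow> nat set \<Rightarrow> nat \<Rightarrow> complex" where
  "fourier_coeff p A h = (\<Sum>u\<in>A. add_char p (- (int h * int u)))"

definition perm_exp_sum :: "nat \<Rightarrow> (nat \<Rightarrow> nat) \<Rightarrow> nat \<Rightarrow> nat \<Rightarrow> complex" where
  "perm_exp_sum p \<sigma> h l = (\<Sum>x<p. add_char p (int h * int x + int l * int (\<sigma> x)))"

lemma fourier_inversion:
  assumes "p > 0" "A \<subseteq> {..<p}" "x < p"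
  shows "(\<Sum>h<p. add_char p (int h * int x) * fourier_coeff p A h) = of_nat p * of_bool (x \<in> A)"
proof -
  have "(\<Sum>h<p. add_char p (int h * int x) * fourier_coeff p A h)
      = (\<Sum>u\<in>A. \<Sum>h<p. add_char p (int h * (int x - int u)))"
    unfolding fourier_coeff_def sum_distrib_left
    by (subst sum.swap) (simp add: add_char_add[symmetric] right_diff_distrib)
  also have "\<dots> = (\<Sum>u\<in>A. if u = x then of_nat p else 0)"
  proof (rule sum.cong[OF refl])
    fix u assume "u \<in> A"
    then have "int p dvd int x - int u \<longleftrightarrow> u = x"
      using assms eq_if_dvd_diff_less[of x p u] by auto
    then show "(\<Sum>h<p. add_char p (int h * (int x - int u))) = (if u = x then of_nat p else 0)"
      by (simp add: sum_add_char[OF assms(1)])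
  qed
  also have "\<dots> = of_nat p * of_bool (x \<in> A)"
    using finite_subset[OF assms(2)] by (simp add: sum.delta')
  finally show ?thesis .
qed

lemma card_image_Int_fourier:
  assumes "p > 0" "I \<subseteq> {..<p}" "J \<subseteq> {..<p}" "bij_betw \<sigma> {..<p} {..<p}"
  shows "of_nat (card (\<sigma> ` I \<inter> J)) * of_nat p ^ 2
     = (\<Sum>h<p. \<Sum>l<p. fourier_coeff p I h * fourier_coeff p J l * perm_exp_sum p \<sigma> h l)"
proof -
  have card: "(of_nat (card (\<sigma> ` I \<inter> J)) :: complex) = (\<Sum>x<p. of_bool (x \<in> I) * of_bool (\<sigma> x \<in> J))"
  proof -
    have "\<sigma> ` I \<inter> J = \<sigma> ` ({..<p} \<inter> {x. x \<in> I \<and> \<sigma> x \<in> J})" using assms(2) by auto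
    moreover have "inj_on \<sigma> ({..<p} \<inter> {x. x \<in> I \<and> \<sigma> x \<in> J})"
      using assms(4) by (auto simp: bij_betw_def intro: inj_on_subset)
    ultimately show ?thesis by (simp add: card_image flip: of_bool_conj)
  qed
  have "of_nat (card (\<sigma> ` I \<inter> J)) * of_nat p ^ 2
      = (\<Sum>x<p. (of_nat p * of_bool (x \<in> I)) * (of_nat p * of_bool (\<sigma> x \<in> J)) :: complex)"
    unfolding card sum_distrib_right by (simp add: power2_eq_square mult_ac)
  also have "\<dots> = (\<Sum>x<p. (\<Sum>h<p. add_char p (int h * int x) * fourier_coeff p I h)
      * (\<Sum>l<p. add_char p (int l * int (\<sigma> x)) * fourier_coeff p J l))"
  proof (rule sum.cong[OF refl])
    fix x assume "x \<in> {..<p}"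
    moreover have "\<sigma> x \<in> {..<p}" using bij_betw_apply[OF assms(4)] calculation .
    ultimately show "(of_nat p * of_bool (x \<in> I)) * (of_nat p * of_bool (\<sigma> x \<in> J))
      = (\<Sum>h<p. add_char p (int h * int x) * fourier_coeff p I h)
      * (\<Sum>l<p. add_char p (int l * int (\<sigma> x)) * fourier_coeff p J l)"
      by (simp add: fourier_inversion assms(1-3))
  qed
  also have "\<dots> = (\<Sum>x<p. \<Sum>h<p. \<Sum>l<p. fourier_coeff p I h * fourier_coeff p J l
      * add_char p (int h * int x + int l * int (\<sigma> x)))"
    unfolding sum_product by (intro sum.cong refl) (simp add: add_char_add mult_ac)
  also have "\<dots> = (\<Sum>h<p. \<Sum>l<p. \<Sum>x<p. fourier_coeff p I h * fourier_coeff p J l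
      * add_char p (int h * int x + int l * int (\<sigma> x)))"
    by (subst sum.swap) (intro sum.cong refl sum.swap)
  also have "\<dots> = (\<Sum>h<p. \<Sum>l<p. fourier_coeff p I h * fourier_coeff p J l * perm_exp_sum p \<sigma> h l)"
    by (simp only: perm_exp_sum_def sum_distrib_left)
  finally show ?thesis .
qed

lemma perm_exp_sum_0_right:
  assumes "0 < h" "h < p" shows "perm_exp_sum p \<sigma> h 0 = 0"
proof -
  have "\<not> int p dvd int h" using assms by (auto dest: zdvd_imp_le)
  then show ?thesis using sum_add_char[of p "int h"] assms by (simp add: perm_exp_sum_def mult.commute)
qed

lemma perm_exp_sum_0_left:
  assumes "0 < l" "l < p" "bij_betw \<sigma> {..<p} {..<p}" shows "perm_exp_sum p \<sigma> 0 l = 0"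
proof -
  have "perm_exp_sum p \<sigma> 0 l = (\<Sum>y<p. add_char p (int y * int l))"
    using sum.reindex_bij_betw[OF assms(3), of "\<lambda>y. add_char p (int y * int l)"]
    by (simp add: perm_exp_sum_def mult.commute)
  moreover have "\<not> int p dvd int l" using assms by (auto dest: zdvd_imp_le)
  ultimately show ?thesis using sum_add_char[of p "int l"] assms by simp
qed

lemma card_image_Int_eq_main_term_plus_error:
  assumes "p > 0" "I \<subseteq> {..<p}" "J \<subseteq> {..<p}" "bij_betw \<sigma> {..<p} {..<p}"
  shows "of_nat (card (\<sigma> ` I \<inter> J)) * of_nat p ^ 2
     = of_nat (card I) * of_nat (card J) * of_nat p
       + (\<Sum>h\<in>{1..<p}. \<Sum>l\<in>{1..<p}. fourier_coeff p I h * fourier_coeff p J l * perm_exp_sum p \<sigma> h l)"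
proof -
  have split: "{..<p} = insert 0 {1..<p}" using assms(1) by auto
  have "finite I" "finite J" using assms(2,3) finite_subset by blast+
  then have "fourier_coeff p I 0 * fourier_coeff p J 0 * perm_exp_sum p \<sigma> 0 0
      = of_nat (card I) * of_nat (card J) * of_nat p"
    by (simp add: fourier_coeff_def perm_exp_sum_def)
  moreover have "perm_exp_sum p \<sigma> 0 l = 0" if "l \<in> {1..<p}" for l
    using that assms(4) by (simp add: perm_exp_sum_0_left)
  moreover have "perm_exp_sum p \<sigma> h 0 = 0" if "h \<in> {1..<p}" for h
    using that by (simp add: perm_exp_sum_0_right)
  ultimately show ?thesis
    unfolding card_image_Int_fourier[OF assms] split by (simp add: sum.distrib)
qed

lemma discr_image_le:
  assumes "p > 0" "I \<subseteq> {..<p}" "J \<subseteq> {..<p}" "bij_betw \<sigma> {..<p} {..<p}"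
    and bound: "\<And>h l. h \<in> {1..<p} \<Longrightarrow> l \<in> {1..<p} \<Longrightarrow> norm (perm_exp_sum p \<sigma> h l) \<le> B"
  shows "discr p J (\<sigma> ` I) \<le> B * (\<Sum>h\<in>{1..<p}. norm (fourier_coeff p I h))
    * (\<Sum>l\<in>{1..<p}. norm (fourier_coeff p J l)) / real p ^ 2"
proof -
  define R where "R = (\<Sum>h\<in>{1..<p}. \<Sum>l\<in>{1..<p}.
    fourier_coeff p I h * fourier_coeff p J l * perm_exp_sum p \<sigma> h l)"
  have "card (\<sigma> ` I) = card I"
    using assms(2,4) by (metis bij_betw_def card_image inj_on_subset)
  then have "complex_of_real (real (card (\<sigma> ` I \<inter> J)) - real (card (\<sigma> ` I)) * real (card J) / real p)
      = R / of_nat p ^ 2"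
    using card_image_Int_eq_main_term_plus_error[OF assms(1-4)] assms(1)
    unfolding R_def[symmetric] by (simp add: field_simps power2_eq_square)
  then have "discr p J (\<sigma> ` I) = norm R / real p ^ 2"
    unfolding discr_def by (metis norm_of_real norm_divide norm_of_nat norm_power)
  moreover have "norm R \<le> (\<Sum>h\<in>{1..<p}. \<Sum>l\<in>{1..<p}.
      norm (fourier_coeff p I h) * norm (fourier_coeff p J l) * B)"
    unfolding R_def by (intro sum_norm_le) (auto simp: norm_mult intro!: mult_left_mono bound)
  moreover have "(\<Sum>h\<in>{1..<p}. \<Sum>l\<in>{1..<p}. norm (fourier_coeff p I h) * norm (fourier_coeff p J l) * B)
      = B * (\<Sum>h\<in>{1..<p}. norm (fourier_coeff p I h)) * (\<Sum>l\<in>{1..<p}. norm (fourier_coeff p J l))"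
    by (simp add: sum_product sum_distrib_left mult_ac)
  ultimately show ?thesis by (simp add: divide_right_mono)
qed

section \<open>Fourier coefficients of intervals\<close>

lemma half_le_sin:
  fixes x :: real assumes "0 \<le> x" "x \<le> pi/2" shows "x/2 \<le> sin x"
proof (cases "x \<le> pi/3")
  case True
  let ?f = "\<lambda>x. sin x - x/2"
  have "(?f has_real_derivative cos u - 1/2) (at u)" for u
    by (auto intro!: derivative_eq_intros)
  moreover have "0 \<le> cos u - 1/2" if "0 \<le> u" "u \<le> x" for u
  proof -
    have "cos (pi/3) \<le> cos u" using that True by (intro cos_monotone_0_pi_le) auto
    then show ?thesis by (simp add: cos_60)
  qed
  ultimately have "?f 0 \<le> ?f x"
    using DERIV_nonneg_imp_nondecreasing[OF assms(1), of ?f] by blast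
  then show ?thesis by simp
next
  case False
  have "sin (pi/3) \<le> sin x" using False assms by (intro sin_monotone_2pi_le) auto
  moreover have "pi/4 \<le> sqrt 3 / 2"
  proof -
    have "(1.7::real) \<le> sqrt 3" by (rule real_le_rsqrt) (simp add: power2_eq_square)
    moreover have "pi \<le> 3.2" using pi_approx by simp
    ultimately show ?thesis by linarith
  qed
  ultimately show ?thesis using assms by (simp add: sin_60)
qed

lemma min_half_le_sin:
  fixes x :: real assumes "0 \<le> x" "x \<le> pi" shows "min x (pi - x) / 2 \<le> sin x"
proof (cases "x \<le> pi/2")
  case True then show ?thesis using half_le_sin[of x] assms by simp
next
  case False then show ?thesis using half_le_sin[of "pi - x"] assms by simp
qed

lemma norm_1_minus_add_char_ge:
  assumes "0 < r" "r < p"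
  shows "2 * real (min r (p - r)) / real p \<le> norm (1 - add_char p (int r))"
proof -
  define t where "t = 2 * pi * real r / real p"
  have "add_char p (int r) = exp (\<i> * of_real t)"
    by (simp add: add_char_def t_def cis_conv_exp)
  then have eq: "norm (1 - add_char p (int r)) = 2 * \<bar>sin (t/2)\<bar>"
    by (metis dist_exp_i_1 norm_minus_commute)
  have t2: "t/2 = pi * (real r / real p)" by (simp add: t_def)
  have "0 \<le> real r / real p" "real r / real p \<le> 1" using assms by auto
  then have "0 \<le> t/2" "t/2 \<le> pi"
    unfolding t2 by (auto simp: mult_le_cancel_left1 simp del: times_divide_eq_right)
  then have "min (t/2) (pi - t/2) / 2 \<le> sin (t/2)" by (rule min_half_le_sin)
  moreover have "2 * (real (min r (p - r)) / real p) \<le> pi * (real (min r (p - r)) / real p)"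
    using pi_gt3 by (intro mult_right_mono) auto
  moreover have "min (t/2) (pi - t/2) = pi * (real (min r (p - r)) / real p)"
    unfolding t2 using assms by (auto simp: min_def field_simps of_nat_diff)
  ultimately show ?thesis using eq abs_ge_self[of "sin (t/2)"] by linarith
qed

lemma zn_interval_eq_image: "zn_interval n s L = (\<lambda>i. (s + i) mod n) ` {..<L}"
  unfolding zn_interval_def by auto

lemma inj_on_zn_interval:
  fixes s n L :: nat
  assumes "L \<le> n" shows "inj_on (\<lambda>i. (s + i) mod n) {..<L}"
proof (rule inj_onI)
  fix i j assume ij: "i \<in> {..<L}" "j \<in> {..<L}" and "(s + i) mod n = (s + j) mod n"
  then have "[s + i = s + j] (mod n)" by (simp add: cong_def)
  then have "[i = j] (mod n)" by (simp add: cong_add_lcancel_nat)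
  then show "i = j" using ij assms by (auto intro: cong_less_modulus_unique_nat)
qed

lemma norm_fourier_coeff_interval_le:
  assumes "L \<le> p" "0 < h" "h < p"
  shows "norm (fourier_coeff p (zn_interval p s L) h) \<le> real p / real (min h (p - h))"
proof -
  have p: "p > 0" using assms by simp
  define z where "z = add_char p (- int h)"
  have "fourier_coeff p (zn_interval p s L) h = (\<Sum>i<L. add_char p (- (int h * int ((s + i) mod p))))"
    unfolding fourier_coeff_def zn_interval_eq_image
    using inj_on_zn_interval[OF assms(1)] by (simp add: sum.reindex)
  also have "\<dots> = (\<Sum>i<L. add_char p (- (int h * int s)) * z ^ i)"
  proof (rule sum.cong[OF refl])
    fix i
    have "[- int h * int ((s + i) mod p) = - int h * (int s + int i)] (mod int p)"
      by (intro cong_mult cong_refl) (simp add: cong_def of_nat_mod)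
    then have "add_char p (- (int h * int ((s + i) mod p))) = add_char p (- (int h * int s) + int i * - int h)"
      using add_char_cong[OF p] by (simp add: algebra_simps)
    also have "\<dots> = add_char p (- (int h * int s)) * z ^ i"
      by (simp only: add_char_add z_def add_char_power)
    finally show "add_char p (- (int h * int ((s + i) mod p))) = add_char p (- (int h * int s)) * z ^ i" .
  qed
  also have "\<dots> = add_char p (- (int h * int s)) * (\<Sum>i<L. z ^ i)"
    by (simp add: sum_distrib_left)
  finally have "norm (fourier_coeff p (zn_interval p s L) h) = norm (\<Sum>i<L. z ^ i)"
    by (simp add: norm_mult)
  also have "\<dots> = norm (z ^ L - 1) / norm (z - 1)"
  proof -
    have "\<not> int p dvd - int h" using assms by (auto dest: zdvd_imp_le)
    then have "z \<noteq> 1" unfolding z_def by (simp add: add_char_eq_1_iff[OF p])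
    then show ?thesis by (simp add: geometric_sum norm_divide)
  qed
  also have "\<dots> \<le> 2 / norm (z - 1)"
    using norm_triangle_ineq4[of "z ^ L" 1] by (intro divide_right_mono) (simp_all add: z_def norm_power)
  also have "\<dots> \<le> 2 / (2 * real (min h (p - h)) / real p)"
  proof (rule divide_left_mono)
    have "norm (z - 1) = norm (1 - add_char p (int h))"
      by (metis z_def add_char_uminus complex_cnj_diff complex_cnj_one complex_mod_cnj norm_minus_commute)
    then show lower: "2 * real (min h (p - h)) / real p \<le> norm (z - 1)"
      using norm_1_minus_add_char_ge[OF assms(2,3)] by simp
    have "0 < 2 * real (min h (p - h)) / real p" using assms by simp
    with lower show "0 < norm (z - 1) * (2 * real (min h (p - h)) / real p)"
      by (intro mult_pos_pos) auto
  qed simp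
  also have "\<dots> = real p / real (min h (p - h))" using assms by (simp add: field_simps)
  finally show ?thesis .
qed

lemma sum_norm_fourier_coeff_interval_le:
  assumes "L \<le> p" "0 < p"
  shows "(\<Sum>h\<in>{1..<p}. norm (fourier_coeff p (zn_interval p s L) h)) \<le> 2 * real p * (1 + ln (real p))"
proof -
  have "(\<Sum>h\<in>{1..<p}. norm (fourier_coeff p (zn_interval p s L) h))
      \<le> (\<Sum>h\<in>{1..<p}. real p * (1 / real h + 1 / real (p - h)))"
  proof (rule sum_mono)
    fix h assume h: "h \<in> {1..<p}"
    then have "1 / real (min h (p - h)) \<le> 1 / real h + 1 / real (p - h)"
      by (cases "h \<le> p - h") (auto simp: min_def)
    then have "real p * (1 / real (min h (p - h))) \<le> real p * (1 / real h + 1 / real (p - h))"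
      by (rule mult_left_mono) simp
    then show "norm (fourier_coeff p (zn_interval p s L) h) \<le> real p * (1 / real h + 1 / real (p - h))"
      using norm_fourier_coeff_interval_le[OF assms(1), of h s] h by simp
  qed
  also have "\<dots> = real p * ((\<Sum>h\<in>{1..<p}. 1 / real h) + (\<Sum>h\<in>{1..<p}. 1 / real (p - h)))"
    by (simp only: sum.distrib[symmetric] sum_distrib_left)
  also have "(\<Sum>h\<in>{1..<p}. 1 / real (p - h)) = (\<Sum>h\<in>{1..<p}. 1 / real h)"
    by (subst sum.atLeastLessThan_rev) (intro sum.cong refl, auto simp: of_nat_diff)
  also have "real p * ((\<Sum>h\<in>{1..<p}. 1 / real h) + (\<Sum>h\<in>{1..<p}. 1 / real h))
      = 2 * real p * (\<Sum>h\<in>{1..<p}. 1 / real h)"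
    by simp
  also have "(\<Sum>h\<in>{1..<p}. 1 / real h) \<le> harm p"
    unfolding harm_def inverse_eq_divide by (rule sum_mono2) auto
  also have "harm p \<le> 1 + ln (real p)"
    using euler_mascheroni_sequence_decreasing[of 1 p] assms(2) by (simp add: harm_def)
  finally show ?thesis by (simp add: mult_left_mono)
qed

section \<open>Counting solutions of the moment equations\<close>

lemma card_roots_mod_prime_le:
  fixes p :: nat and f :: "int poly"
  assumes "prime p" "degree f \<le> n" "\<not> int p dvd Polynomial.coeff f n"
  shows "card {x\<in>{..<p}. int p dvd poly f (int x)} \<le> n"
  using assms(2,3)
proof (induction n arbitrary: f)
  case 0
  then obtain a where "f = [:a:]" using degree0_coeffs[of f] by auto
  then show ?case using 0 by simp
next
  case (Suc n)
  show ?case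
  proof (cases "{x\<in>{..<p}. int p dvd poly f (int x)} = {}")
    case True then show ?thesis by (metis card.empty zero_le)
  next
    case False
    then obtain r where r: "r < p" "int p dvd poly f (int r)" by auto
    define g where "g = synthetic_div f (int r)"
    have "degree g \<le> n" using Suc.prems by (simp add: g_def degree_synthetic_div)
    moreover have "Polynomial.coeff g n = Polynomial.coeff f (Suc n)"
    proof -
      have "f + Polynomial.smult (int r) g = pCons (poly f (int r)) g"
        unfolding g_def by (rule synthetic_div_correct)
      then have "Polynomial.coeff (f + Polynomial.smult (int r) g) (Suc n) = Polynomial.coeff g n"
        by simp
      moreover have "Polynomial.coeff g (Suc n) = 0" using \<open>degree g \<le> n\<close> by (simp add: coeff_eq_0)
      ultimately show ?thesis by simp
    qed
    ultimately have IH: "card {x\<in>{..<p}. int p dvd poly g (int x)} \<le> n"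
      using Suc.IH Suc.prems(2) by simp
    have division: "poly f y = (y - int r) * poly g y + poly f (int r)" for y
    proof -
      have "poly ([:- int r, 1:] * g + [:poly f (int r):]) y = poly f y"
        unfolding g_def by (simp only: synthetic_div_correct')
      then show ?thesis by (simp add: algebra_simps)
    qed
    have "prime (int p)" using assms(1) by simp
    have "{x\<in>{..<p}. int p dvd poly f (int x)} \<subseteq> insert r {x\<in>{..<p}. int p dvd poly g (int x)}"
    proof
      fix x assume x: "x \<in> {x\<in>{..<p}. int p dvd poly f (int x)}"
      then have "int p dvd (int x - int r) * poly g (int x)"
        using division[of "int x"] r(2) by (metis (no_types, lifting) dvd_add_left_iff mem_Collect_eq)
      then have "int p dvd int x - int r \<or> int p dvd poly g (int x)"
        using \<open>prime (int p)\<close> by (simp add: prime_dvd_mult_iff)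
      then show "x \<in> insert r {x\<in>{..<p}. int p dvd poly g (int x)}"
        using x r(1) eq_if_dvd_diff_less[of x p r] by auto
    qed
    then have "card {x\<in>{..<p}. int p dvd poly f (int x)} \<le> card (insert r {x\<in>{..<p}. int p dvd poly g (int x)})"
      by (intro card_mono) simp_all
    also have "\<dots> \<le> Suc n" using IH by (simp add: card_insert_if)
    finally show ?thesis .
  qed
qed

lemma card_roots_power_diff_le:
  fixes p k :: nat and c d :: int
  assumes "prime p" "2 \<le> k" "k < p" "\<not> int p dvd c"
  shows "card {x\<in>{..<p}. int p dvd (int x)^k - (int x + c)^k + d} \<le> k - 1"
proof -
  define q :: "int poly" where "q = Polynomial.monom 1 k - [:c, 1:]^k + [:d:]"
  have "degree q \<le> k - 1"
  proof (rule degree_le, intro allI impI)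
    fix i assume "k - 1 < i"
    then have "i = k \<or> k < i" by linarith
    then show "Polynomial.coeff q i = 0"
      using assms(2)
      by (auto simp: q_def coeff_monom coeff_linear_power coeff_eq_0 degree_linear_power coeff_pCons
               split: nat.split)
  qed
  moreover have "Polynomial.coeff q (k - 1) = - (int k * c)"
    using assms(2)
    by (auto simp: q_def coeff_monom coeff_linear_poly_power binomial_symmetric[symmetric] coeff_pCons
             split: nat.split)
  moreover have "\<not> int p dvd - (int k * c)"
  proof -
    have "prime (int p)" using assms(1) by simp
    then show ?thesis using assms(2-4) by (auto simp: prime_dvd_mult_iff dest: dvd_imp_le)
  qed
  ultimately have "card {x\<in>{..<p}. int p dvd poly q (int x)} \<le> k - 1"
    using card_roots_mod_prime_le[OF assms(1)] by simp
  then show ?thesis by (simp add: q_def poly_monom algebra_simps)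
qed

lemma card_energy_le:
  fixes p k :: nat
  assumes "prime p" "2 \<le> k" "k < p"
  shows "card {((x1, x2), (x3, x4)) \<in> ({..<p} \<times> {..<p}) \<times> ({..<p} \<times> {..<p}).
      [x1 + x2 = x3 + x4] (mod p) \<and> [x1 ^ k + x2 ^ k = x3 ^ k + x4 ^ k] (mod p)} \<le> k * p\<^sup>2"
    (is "card ?N \<le> _")
proof -
  define R where "R x1 x3 = {x2\<in>{..<p}. int p dvd
    (int x2)^k - (int x2 + (int x1 - int x3))^k + ((int x1)^k - (int x3)^k)}" for x1 x3
  define \<phi> :: "(nat \<times> nat) \<times> (nat \<times> nat) \<Rightarrow> nat \<times> nat \<times> nat"
    where "\<phi> = (\<lambda>((x1, x2), (x3, x4)). (x1, x3, x2))"
  have inj: "inj_on \<phi> ?N"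
  proof (rule inj_onI)
    fix u v assume u: "u \<in> ?N" and v: "v \<in> ?N" and eq: "\<phi> u = \<phi> v"
    obtain x1 x2 x3 x4 where u_def: "u = ((x1, x2), (x3, x4))" by (metis prod.collapse)
    obtain y1 y2 y3 y4 where v_def: "v = ((y1, y2), (y3, y4))" by (metis prod.collapse)
    from eq have same: "y1 = x1" "y2 = x2" "y3 = x3" by (simp_all add: \<phi>_def u_def v_def)
    with u v have "[x1 + x2 = x3 + x4] (mod p)" "[x1 + x2 = x3 + y4] (mod p)" "x4 < p" "y4 < p"
      by (auto simp: u_def v_def)
    then have "[x3 + x4 = x3 + y4] (mod p)" by (metis cong_sym cong_trans)
    then have "x4 = y4"
      using \<open>x4 < p\<close> \<open>y4 < p\<close> by (simp add: cong_add_lcancel_nat cong_less_modulus_unique_nat)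
    then show "u = v" by (simp add: u_def v_def same)
  qed
  have sub: "\<phi> ` ?N \<subseteq> Sigma {..<p} (\<lambda>x1. Sigma {..<p} (R x1))"
  proof
    fix w assume "w \<in> \<phi> ` ?N"
    then obtain x1 x2 x3 x4 where N: "((x1, x2), (x3, x4)) \<in> ?N" and w: "w = (x1, x3, x2)"
      by (auto simp: \<phi>_def)
    have "[int x1 + int x2 = int x3 + int x4] (mod int p)"
      using N cong_int_iff[of "x1 + x2" "x3 + x4" p] by simp
    then have "[int x1 + int x2 - int x3 = int x3 + int x4 - int x3] (mod int p)"
      by (intro cong_diff cong_refl)
    then have pow: "[(int x2 + (int x1 - int x3))^k = (int x4)^k] (mod int p)"
      by (intro cong_pow) (simp add: algebra_simps)
    have energy: "[(int x1)^k + (int x2)^k = (int x3)^k + (int x4)^k] (mod int p)"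
      using N cong_int_iff[of "x1^k + x2^k" "x3^k + x4^k" p] by simp
    have "[(int x1)^k + (int x2)^k - ((int x3)^k + (int x2 + (int x1 - int x3))^k)
        = (int x3)^k + (int x4)^k - ((int x3)^k + (int x4)^k)] (mod int p)"
      by (rule cong_diff[OF energy cong_add[OF cong_refl pow]])
    then have "int p dvd (int x2)^k - (int x2 + (int x1 - int x3))^k + ((int x1)^k - (int x3)^k)"
      by (simp add: cong_0_iff algebra_simps)
    then show "w \<in> Sigma {..<p} (\<lambda>x1. Sigma {..<p} (R x1))"
      using N by (simp add: w R_def)
  qed
  have card_R: "card (R x1 x3) \<le> p * of_bool (x1 = x3) + (k - 1)" if "x1 < p" "x3 < p" for x1 x3
  proof (cases "x1 = x3")
    case True
    have "card (R x1 x3) \<le> card {..<p}" by (rule card_mono) (auto simp: R_def)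
    then show ?thesis using True by simp
  next
    case False
    then have "\<not> int p dvd int x1 - int x3" using eq_if_dvd_diff_less that by blast
    then show ?thesis
      unfolding R_def using card_roots_power_diff_le[OF assms] by simp
  qed
  have "card ?N = card (\<phi> ` ?N)" using inj by (simp add: card_image)
  also have "\<dots> \<le> card (Sigma {..<p} (\<lambda>x1. Sigma {..<p} (R x1)))"
    by (rule card_mono[OF _ sub]) (auto simp: R_def intro!: finite_SigmaI)
  also have "\<dots> = (\<Sum>x1<p. \<Sum>x3<p. card (R x1 x3))" by (simp add: R_def card_SigmaI)
  also have "\<dots> \<le> (\<Sum>x1<p. \<Sum>x3<p. p * of_bool (x1 = x3) + (k - 1))"
    using card_R by (intro sum_mono) auto
  also have "\<dots> = (\<Sum>x1<p. p + p * (k - 1))"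
    by (simp add: sum.distrib sum_distrib_left[symmetric] of_bool_def sum.If_cases)
  also have "\<dots> = k * p\<^sup>2"
    using assms(2) by (simp add: power2_eq_square algebra_simps)
  finally show ?thesis .
qed

section \<open>The exponential sum of a monomial\<close>

lemma sum_sq_norm_exp_sum:
  fixes s t :: "'q \<Rightarrow> int"
  assumes "p > 0" "finite Q"
  shows "(\<Sum>h<p. \<Sum>l<p. (norm (\<Sum>q\<in>Q. add_char p (int h * s q + int l * t q)))\<^sup>2)
    = real p ^ 2 * real (card {(y, z) \<in> Q \<times> Q. [s y = s z] (mod int p) \<and> [t y = t z] (mod int p)})"
  (is "_ = _ * real (card ?C)")
proof -
  define C where "C = ?C"
  define g where "g h l y z = add_char p (int h * (s y - s z)) * add_char p (int l * (t y - t z))"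
    for h l y z
  have sq: "complex_of_real ((norm (\<Sum>q\<in>Q. add_char p (int h * s q + int l * t q)))\<^sup>2)
      = (\<Sum>y\<in>Q. \<Sum>z\<in>Q. g h l y z)" for h l
  proof -
    have "complex_of_real ((norm (\<Sum>q\<in>Q. add_char p (int h * s q + int l * t q)))\<^sup>2)
       = (\<Sum>y\<in>Q. add_char p (int h * s y + int l * t y)) * (\<Sum>z\<in>Q. add_char p (- (int h * s z + int l * t z)))"
      unfolding complex_norm_square cnj_sum by (simp only: add_char_uminus)
    also have "\<dots> = (\<Sum>y\<in>Q. \<Sum>z\<in>Q. g h l y z)"
      unfolding sum_product g_def by (intro sum.cong refl) (simp add: add_char_add[symmetric] algebra_simps)
    finally show ?thesis .
  qed
  have "complex_of_real (\<Sum>h<p. \<Sum>l<p. (norm (\<Sum>q\<in>Q. add_char p (int h * s q + int l * t q)))\<^sup>2)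
      = (\<Sum>y\<in>Q. \<Sum>z\<in>Q. (\<Sum>h<p. add_char p (int h * (s y - s z))) * (\<Sum>l<p. add_char p (int l * (t y - t z))))"
    unfolding of_real_sum sq g_def sum_product
    by (subst (2) sum.swap, subst sum.swap, subst (3) sum.swap, subst (2) sum.swap) (rule refl)
  also have "\<dots> = (\<Sum>x\<in>Q \<times> Q. of_bool (x \<in> C) * of_nat p ^ 2)"
    unfolding sum.cartesian_product
    by (intro sum.cong refl)
      (auto simp: C_def sum_add_char[OF assms(1)] cong_iff_dvd_diff power2_eq_square split: if_splits)
  also have "\<dots> = of_nat (card C) * of_nat p ^ 2"
    using assms(2) Int_absorb1[of C "Q \<times> Q"] by (simp add: C_def sum_distrib_right[symmetric] subset_iff)
  finally have "complex_of_real (\<Sum>h<p. \<Sum>l<p. (norm (\<Sum>q\<in>Q. add_char p (int h * s q + int l * t q)))\<^sup>2)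
      = complex_of_real (real p ^ 2 * real (card C))"
    by (simp add: mult_ac)
  then show ?thesis unfolding C_def of_real_eq_iff .
qed

definition binom_exp_sum :: "nat \<Rightarrow> int \<Rightarrow> nat \<Rightarrow> int \<Rightarrow> int \<Rightarrow> complex" where
  "binom_exp_sum p A k h l = (\<Sum>x<p. add_char p (h * int x + l * (A * int x ^ k)))"

lemma binom_exp_sum_fourth_moment:
  fixes p k :: nat and A :: int
  assumes "prime p" "2 \<le> k" "k < p" "\<not> int p dvd A"
  shows "(\<Sum>h<p. \<Sum>l<p. norm (binom_exp_sum p A k (int h) (int l)) ^ 4) \<le> real k * real p ^ 4"
proof -
  have p: "p > 0" using assms(1) prime_gt_0_nat by blast
  define Q where "Q = {..<p} \<times> {..<p}"
  define s where "s = (\<lambda>(x1, x2). int x1 + int x2)"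
  define t where "t = (\<lambda>(x1, x2). A * (int x1 ^ k + int x2 ^ k))"
  have square: "binom_exp_sum p A k (int h) (int l) ^ 2 = (\<Sum>q\<in>Q. add_char p (int h * s q + int l * t q))"
    for h l
    unfolding binom_exp_sum_def power2_eq_square sum_product Q_def sum.cartesian_product
    by (intro sum.cong refl) (auto simp: s_def t_def add_char_add[symmetric] algebra_simps)
  have "prime (int p)" using assms(1) by simp
  then have "coprime A (int p)" using assms(4) by (metis prime_imp_coprime coprime_commute)
  then have "{(y, z) \<in> Q \<times> Q. [s y = s z] (mod int p) \<and> [t y = t z] (mod int p)}
      = {((x1, x2), (x3, x4)) \<in> Q \<times> Q.
          [x1 + x2 = x3 + x4] (mod p) \<and> [x1 ^ k + x2 ^ k = x3 ^ k + x4 ^ k] (mod p)}"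
    by (auto simp: s_def t_def cong_mult_lcancel simp flip: cong_int_iff)
  then have "real (card {(y, z) \<in> Q \<times> Q. [s y = s z] (mod int p) \<and> [t y = t z] (mod int p)})
      \<le> real (k * p\<^sup>2)"
    using card_energy_le[OF assms(1-3)] unfolding Q_def of_nat_le_iff by simp
  moreover have "finite Q" by (simp add: Q_def)
  ultimately have "(\<Sum>h<p. \<Sum>l<p. (norm (\<Sum>q\<in>Q. add_char p (int h * s q + int l * t q)))\<^sup>2)
      \<le> real p ^ 2 * real (k * p\<^sup>2)"
    by (simp add: sum_sq_norm_exp_sum[OF p] mult_left_mono)
  moreover have "norm (binom_exp_sum p A k (int h) (int l)) ^ 4
      = (norm (\<Sum>q\<in>Q. add_char p (int h * s q + int l * t q)))\<^sup>2" for h l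
    by (simp flip: square add: norm_power power_mult[symmetric])
  ultimately show ?thesis by (simp add: power2_eq_square power4_eq_xxxx mult_ac)
qed

lemma add_char_binom_cong:
  assumes "p > 0" "[x = x'] (mod int p)" "[h = h'] (mod int p)" "[l = l'] (mod int p)"
  shows "add_char p (h * x + l * (A * x ^ k)) = add_char p (h' * x' + l' * (A * x' ^ k))"
  using assms by (intro add_char_cong cong_add cong_mult cong_pow cong_refl) auto

lemma binom_exp_sum_cong:
  assumes "p > 0" "[h = h'] (mod int p)" "[l = l'] (mod int p)"
  shows "binom_exp_sum p A k h l = binom_exp_sum p A k h' l'"
  unfolding binom_exp_sum_def using assms by (intro sum.cong refl add_char_binom_cong) auto

lemma bij_betw_mult_mod_prime:
  fixes p c :: nat
  assumes "prime p" "\<not> p dvd c"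
  shows "bij_betw (\<lambda>y. (c * y) mod p) {..<p} {..<p}"
proof -
  have "coprime c p" using assms by (metis coprime_commute prime_imp_coprime)
  then have inj: "inj_on (\<lambda>y. (c * y) mod p) {..<p}"
    by (intro inj_onI) (auto simp: cong_def[symmetric] cong_mult_lcancel_nat cong_less_modulus_unique_nat)
  moreover have "(\<lambda>y. (c * y) mod p) ` {..<p} = {..<p}"
    using assms(1) by (intro endo_inj_surj[OF _ _ inj]) (auto simp: prime_gt_0_nat)
  ultimately show ?thesis by (simp add: bij_betw_def)
qed

lemma binom_exp_sum_scale:
  fixes p c :: nat
  assumes "prime p" "\<not> p dvd c"
  shows "binom_exp_sum p A k h l = binom_exp_sum p A k (int c * h) (int c ^ k * l)"
proof -
  have p: "p > 0" using assms(1) prime_gt_0_nat by blast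
  have "binom_exp_sum p A k h l = (\<Sum>y<p. add_char p (h * int ((c * y) mod p) + l * (A * int ((c * y) mod p) ^ k)))"
    unfolding binom_exp_sum_def
    by (rule sum.reindex_bij_betw[OF bij_betw_mult_mod_prime[OF assms], symmetric])
  also have "\<dots> = (\<Sum>y<p. add_char p (h * (int c * int y) + l * (A * (int c * int y) ^ k)))"
    by (intro sum.cong refl add_char_binom_cong[OF p]) (auto simp: cong_def zmod_int)
  also have "\<dots> = binom_exp_sum p A k (int c * h) (int c ^ k * l)"
    unfolding binom_exp_sum_def by (simp add: power_mult_distrib algebra_simps)
  finally show ?thesis .
qed

lemma binom_exp_sum_orbit_le:
  fixes p k h l :: nat
  assumes "prime p" "0 < h" "h < p"
  shows "real (p - 1) * norm (binom_exp_sum p A k (int h) (int l)) ^ 4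
    \<le> (\<Sum>u<p. \<Sum>v<p. norm (binom_exp_sum p A k (int u) (int v)) ^ 4)"
proof -
  have p: "p > 0" using assms(1) prime_gt_0_nat by blast
  define G where "G = (\<lambda>(u, v). norm (binom_exp_sum p A k (int u) (int v)) ^ 4)"
  define orbit where "orbit c = ((c * h) mod p, (c ^ k * l) mod p)" for c
  have G_orbit: "G (orbit c) = norm (binom_exp_sum p A k (int h) (int l)) ^ 4" if "c \<in> {1..<p}" for c
  proof -
    have "\<not> p dvd c" using that by (auto dest: dvd_imp_le)
    then have "binom_exp_sum p A k (int h) (int l) = binom_exp_sum p A k (int c * int h) (int c ^ k * int l)"
      by (rule binom_exp_sum_scale[OF assms(1)])
    also have "\<dots> = binom_exp_sum p A k (int ((c * h) mod p)) (int ((c ^ k * l) mod p))"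
      by (rule binom_exp_sum_cong[OF p]) (simp_all add: cong_def zmod_int)
    finally show ?thesis by (simp add: G_def orbit_def)
  qed
  have inj: "inj_on orbit {1..<p}"
  proof (rule inj_onI)
    fix c c' assume c: "c \<in> {1..<p}" "c' \<in> {1..<p}" and "orbit c = orbit c'"
    then have "[h * c = h * c'] (mod p)" by (simp add: orbit_def cong_def mult.commute)
    moreover have "coprime h p" using assms by (metis coprime_commute prime_imp_coprime dvd_imp_le not_le)
    ultimately have "[c = c'] (mod p)" by (simp add: cong_mult_lcancel_nat)
    then show "c = c'" using c by (auto intro: cong_less_modulus_unique_nat)
  qed
  have "(\<Sum>c\<in>{1..<p}. G (orbit c)) = (\<Sum>uv\<in>orbit ` {1..<p}. G uv)"
    using inj by (simp add: sum.reindex)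
  also have "\<dots> \<le> (\<Sum>uv\<in>{..<p} \<times> {..<p}. G uv)"
    using p by (intro sum_mono2) (auto simp: G_def orbit_def)
  finally have "(\<Sum>c\<in>{1..<p}. G (orbit c)) \<le> (\<Sum>uv\<in>{..<p} \<times> {..<p}. G uv)" .
  then show ?thesis using G_orbit by (simp add: sum.cartesian_product G_def)
qed

lemma norm_binom_exp_sum_le:
  fixes p k h l :: nat and A :: int
  assumes "prime p" "2 \<le> k" "k < p" "\<not> int p dvd A" "0 < h" "h < p"
  shows "norm (binom_exp_sum p A k (int h) (int l)) \<le> 2 * real k powr (1/4) * real p powr (3/4)"
proof -
  let ?T = "norm (binom_exp_sum p A k (int h) (int l))"
  have p2: "2 \<le> p" using assms(1) prime_ge_2_nat by blast
  have "real (p - 1) * ?T ^ 4 \<le> real k * real p ^ 4"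
    using binom_exp_sum_orbit_le[OF assms(1,5,6), of A k l] binom_exp_sum_fourth_moment[OF assms(1-4)] by linarith
  also have "\<dots> \<le> real (p - 1) * (16 * real k * real p ^ 3)"
  proof -
    have "real p \<le> 16 * real (p - 1)" using p2 by (simp add: of_nat_diff)
    then have "real p * (real k * real p ^ 3) \<le> 16 * real (p - 1) * (real k * real p ^ 3)"
      by (intro mult_right_mono) auto
    then show ?thesis by (simp add: power_eq_if algebra_simps)
  qed
  finally have "?T ^ 4 \<le> 16 * real k * real p ^ 3" using p2 by simp
  also have "16 * real k * real p ^ 3 = (2 * real k powr (1/4) * real p powr (3/4)) ^ 4"
  proof -
    have "(real k powr (1/4)) ^ 4 = real k" using assms(2) by (simp add: powr_power)
    moreover have "(real p powr (3/4)) ^ 4 = real p powr (real 3)" using p2 by (simp add: powr_power)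
    ultimately show ?thesis using p2 by (simp add: power_mult_distrib powr_realpow)
  qed
  finally show ?thesis
    using power_le_imp_le_base[where n=3 and a="?T" and b="2 * real k powr (1/4) * real p powr (3/4)"]
    by simp
qed

section \<open>The permutation \<open>\<eta>\<close>\<close>

lemma fermat_power_cong:
  fixes p x m :: nat
  assumes "prime p"
  shows "[x ^ (1 + m * (p - 1)) = x] (mod p)"
proof (cases "p dvd x")
  case True
  then have "p dvd x ^ (1 + m * (p - 1))" by simp
  then show ?thesis using True by (simp add: cong_def dvd_eq_mod_eq_0)
next
  case False
  then have "[(x ^ (p - 1)) ^ m = 1 ^ m] (mod p)" by (intro cong_pow fermat_theorem[OF assms])
  then have "[x * (x ^ (p - 1)) ^ m = x * 1 ^ m] (mod p)" by (rule cong_scalar_left)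
  then show ?thesis by (simp add: power_add power_mult mult.commute[of m])
qed

lemma bij_betw_eta:
  fixes p a k :: nat
  assumes "prime p" "\<not> p dvd a" "coprime k (p - 1)" "3 \<le> p"
  shows "bij_betw (eta p a k) {..<p} {..<p}"
proof -
  obtain k' where "[k * k' = 1] (mod (p - 1))" using cong_solve_coprime_nat[OF assms(3)] by auto
  then have "(k * k') mod (p - 1) = 1" using assms(4) by (simp add: cong_def)
  then obtain m where m: "k * k' = 1 + m * (p - 1)" by (metis div_mult_mod_eq add.commute)
  have inj: "inj_on (eta p a k) {..<p}"
  proof (rule inj_onI)
    fix x y assume xy: "x \<in> {..<p}" "y \<in> {..<p}" and "eta p a k x = eta p a k y"
    then have "[a * x ^ k = a * y ^ k] (mod p)" by (simp add: eta_def cong_def)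
    moreover have "coprime a p" using assms(1,2) by (metis coprime_commute prime_imp_coprime)
    ultimately have "[(x ^ k) ^ k' = (y ^ k) ^ k'] (mod p)" by (simp add: cong_mult_lcancel_nat cong_pow)
    then have "[x ^ (1 + m * (p - 1)) = y ^ (1 + m * (p - 1))] (mod p)"
      by (simp add: power_mult[symmetric] m)
    then have "[x = y] (mod p)"
      using fermat_power_cong[OF assms(1)] by (meson cong_sym cong_trans)
    then show "x = y" using xy by (auto intro: cong_less_modulus_unique_nat)
  qed
  moreover have "eta p a k ` {..<p} = {..<p}"
    using assms(1) by (intro endo_inj_surj[OF _ _ inj]) (auto simp: eta_def prime_gt_0_nat)
  ultimately show ?thesis by (simp add: bij_betw_def)
qed

lemma perm_exp_sum_eta:
  assumes "p > 0"
  shows "perm_exp_sum p (eta p a k) h l = binom_exp_sum p (int a) k (int h) (int l)"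
  unfolding perm_exp_sum_def binom_exp_sum_def
proof (rule sum.cong[OF refl])
  fix x
  have "[int (eta p a k x) = int a * int x ^ k] (mod int p)" by (simp add: eta_def cong_def zmod_int)
  then have "[int h * int x + int l * int (eta p a k x) = int h * int x + int l * (int a * int x ^ k)] (mod int p)"
    by (intro cong_add cong_mult cong_refl)
  then show "add_char p (int h * int x + int l * int (eta p a k x))
      = add_char p (int h * int x + int l * (int a * int x ^ k))"
    by (rule add_char_cong[OF assms])
qed

lemma perm_discrepancy_le:
  assumes "n > 0" "\<And>I J. I \<in> zn_intervals n \<Longrightarrow> J \<in> zn_intervals n \<Longrightarrow> discr n J (\<sigma> ` I) \<le> B"
  shows "perm_discrepancy n \<sigma> \<le> B"
proof -
  have "zn_intervals n \<subseteq> (\<lambda>(s, L). zn_interval n s L) ` ({..<n} \<times> {..n})"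
    unfolding zn_intervals_def by auto
  then have "finite (zn_intervals n)" by (rule finite_subset) simp
  then have "finite {discr n J (\<sigma> ` I) | I J. I \<in> zn_intervals n \<and> J \<in> zn_intervals n}"
    by (simp add: finite_image_set2)
  moreover have "zn_interval n 0 0 \<in> zn_intervals n" using assms(1) by (auto simp: zn_intervals_def)
  ultimately show ?thesis
    unfolding perm_discrepancy_def using assms(2) by (subst Max_le_iff) auto
qed

lemma discr_eta_le:
  fixes p a k :: nat
  assumes "prime p" "\<not> p dvd a" "2 \<le> k" "k < p" "coprime k (p - 1)"
    and "I \<in> zn_intervals p" "J \<in> zn_intervals p"
  shows "discr p J (eta p a k ` I) \<le> 8 * real k powr (1/4) * real p powr (3/4) * (1 + ln (real p))\<^sup>2"
proof -
  have p: "p > 0" and p3: "3 \<le> p" using assms(1,3,4) prime_gt_0_nat[OF assms(1)] by auto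
  obtain s L where I: "I = zn_interval p s L" "L \<le> p" using assms(6) by (auto simp: zn_intervals_def)
  obtain s' L' where J: "J = zn_interval p s' L'" "L' \<le> p" using assms(7) by (auto simp: zn_intervals_def)
  have "\<not> int p dvd int a" using assms(2) by simp
  then have "norm (perm_exp_sum p (eta p a k) h l) \<le> 2 * real k powr (1/4) * real p powr (3/4)"
    if "h \<in> {1..<p}" "l \<in> {1..<p}" for h l
    using that norm_binom_exp_sum_le[OF assms(1,3,4)] by (simp add: perm_exp_sum_eta[OF p])
  then have "discr p J (eta p a k ` I) \<le> 2 * real k powr (1/4) * real p powr (3/4)
      * (\<Sum>h\<in>{1..<p}. norm (fourier_coeff p I h)) * (\<Sum>l\<in>{1..<p}. norm (fourier_coeff p J l)) / real p ^ 2"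
    using bij_betw_eta[OF assms(1,2,5) p3] p I J
    by (intro discr_image_le) (auto simp: zn_interval_def)
  also have "\<dots> \<le> 2 * real k powr (1/4) * real p powr (3/4)
      * (2 * real p * (1 + ln (real p))) * (2 * real p * (1 + ln (real p))) / real p ^ 2"
    using sum_norm_fourier_coeff_interval_le[OF I(2) p, of s] sum_norm_fourier_coeff_interval_le[OF J(2) p, of s']
    using ln_ge_zero[of "real p"] p by (intro divide_right_mono mult_mono) (auto simp: I(1) J(1) intro: sum_nonneg)
  also have "\<dots> = 8 * real k powr (1/4) * real p powr (3/4) * (1 + ln (real p))\<^sup>2"
    using p by (simp add: power2_eq_square field_simps)
  finally show ?thesis .
qed

lemma sq_one_plus_ln_le:
  fixes x :: real assumes "3 \<le> x" shows "(1 + ln x)\<^sup>2 \<le> 4 * (ln x)\<^sup>2"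
proof -
  have "1 \<le> ln x" using assms exp_le by (simp add: ln_ge_iff)
  then have "(1 + ln x)\<^sup>2 \<le> (2 * ln x)\<^sup>2" by (intro power_mono) auto
  then show ?thesis by (simp add: power_mult_distrib)
qed

theorem mainTheorem8:
  shows "\<exists>C::real. \<forall>(p::nat) (a::nat) (k::nat).
    prime p \<and> a \<in> {1..<p} \<and> 2 \<le> k \<and> k \<le> p - 2 \<and> coprime k (p - 1) \<longrightarrow>
    perm_discrepancy p (eta p a k)
      \<le> C * real k powr (1/4) * real p powr (3/4) * (ln (real p))\<^sup>2"
proof (intro exI allI impI)
  fix p a k :: nat
  assume "prime p \<and> a \<in> {1..<p} \<and> 2 \<le> k \<and> k \<le> p - 2 \<and> coprime k (p - 1)"
  then have p: "prime p" "3 \<le> p" and a: "\<not> p dvd a" and k: "2 \<le> k" "k < p" "coprime k (p - 1)"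
    by (auto dest: dvd_imp_le)
  have "8 * real k powr (1/4) * real p powr (3/4) * (1 + ln (real p))\<^sup>2
      \<le> 8 * real k powr (1/4) * real p powr (3/4) * (4 * (ln (real p))\<^sup>2)"
    using p(2) by (intro mult_left_mono sq_one_plus_ln_le) auto
  then have bound: "8 * real k powr (1/4) * real p powr (3/4) * (1 + ln (real p))\<^sup>2
      \<le> 32 * real k powr (1/4) * real p powr (3/4) * (ln (real p))\<^sup>2" by simp
  show "perm_discrepancy p (eta p a k) \<le> 32 * real k powr (1/4) * real p powr (3/4) * (ln (real p))\<^sup>2"
  proof (rule perm_discrepancy_le)
    fix I J assume "I \<in> zn_intervals p" "J \<in> zn_intervals p"
    then show "discr p J (eta p a k ` I) \<le> 32 * real k powr (1/4) * real p powr (3/4) * (ln (real p))\<^sup>2"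
      by (rule order_trans[OF discr_eta_le[OF p(1) a k] bound])
  qed (use p(2) in simp)
qed

end
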